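(* For all partitions $\xi,\xi'\in P_I$: $\mathcal D_{\xi\text{-unc}}\cap\mathcal D_{\xi'\text{-unc}}=\mathcal D_{(\xi\wedge\xi')\text{-unc}}$, where $\xi\wedge\xi'$ is the meet (greatest common refinement) of $\xi$ and $\xi'$ in $(P_I,\preceq)$.
   Context: Let $n\ge1$, $L=\{1,\dots,n\}$, and for $i\in L$ let $\mathcal H_i$ be a Hilbert space with $1<\dim\mathcal H_i<\infty$; $\mathcal H_X=\bigotimes_{i\in X}\mathcal H_i$ and $\mathcal D_X$ is the set of density operators on $\mathcal H_X$. $P_I$ is the set of partitions of $L$ ordered by refinement ($\upsilon\preceq\xi$ iff every part of $\upsilon$ lies in a part of $\xi$); it is a lattice, and $\xi\wedge\xi'=\{X\cap X':X\in\xi,X'\in\xi',X\cap X'\neq\emptyset\}$. For $\xi\in P_I$, $\mathcal D_{\xi\text{-unc}}=\{\varrho\in\mathcal D_L:\varrho=\bigotimes_{X\in\xi}\varrho_X,\ \varrho_X\in\mathcal D_X\}$. *)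

theory Defs
  imports "HOL-Analysis.Analysis" "HOL-Library.Disjoint_Sets"
begin

text \<open>Site i (i in {1..n}) carries the Hilbert space C^(d i) with
 orthonormal basis indexed by {0..<d i}. For X a set of sites, the tensor product
 H_X has the product basis, indexed by configurations a :: nat => nat with
 a i < d i for i in X and a i = 0 outside X. Operators on H_X are matrices
 indexed by configurations (values outside the configuration set are required to be 0).\<close>

type_synonym config = "nat \<Rightarrow> nat"
type_synonym operator = "config \<Rightarrow> config \<Rightarrow> complex"

definition configs :: "(nat \<Rightarrow> nat) \<Rightarrow> nat set \<Rightarrow> config set" where
  "configs d X = {a. (\<forall>i\<in>X. a i < d i) \<and> (\<forall>i. i \<notin> X \<longrightarrow> a i = 0)}"

definition restr :: "nat set \<Rightarrow> config \<Rightarrow> config" where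
  "restr X a = (\<lambda>i. if i \<in> X then a i else 0)"

definition density :: "(nat \<Rightarrow> nat) \<Rightarrow> nat set \<Rightarrow> operator \<Rightarrow> bool" where
  "density d X \<rho> \<longleftrightarrow>
     (\<forall>a b. (a \<notin> configs d X \<or> b \<notin> configs d X) \<longrightarrow> \<rho> a b = 0) \<and>
     (\<forall>v :: config \<Rightarrow> complex.
        let q = (\<Sum>a\<in>configs d X. \<Sum>b\<in>configs d X. cnj (v a) * \<rho> a b * v b)
        in Im q = 0 \<and> Re q \<ge> 0) \<and>
     (\<Sum>a\<in>configs d X. \<rho> a a) = 1"

definition D :: "(nat \<Rightarrow> nat) \<Rightarrow> nat set \<Rightarrow> operator set" where
  "D d X = {\<rho>. density d X \<rho>}"

definition tensor :: "(nat \<Rightarrow> nat) \<Rightarrow> nat set \<Rightarrow> nat set set \<Rightarrow> (nat set \<Rightarrow> operator) \<Rightarrow> operator" where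
  "tensor d L \<xi> \<rho>s = (\<lambda>a b. if a \<in> configs d L \<and> b \<in> configs d L
      then (\<Prod>X\<in>\<xi>. \<rho>s X (restr X a) (restr X b)) else 0)"

definition D_unc :: "(nat \<Rightarrow> nat) \<Rightarrow> nat set \<Rightarrow> nat set set \<Rightarrow> operator set" where
  "D_unc d L \<xi> = {\<rho>. \<rho> \<in> D d L \<and>
      (\<exists>\<rho>s. (\<forall>X\<in>\<xi>. \<rho>s X \<in> D d X) \<and> \<rho> = tensor d L \<xi> \<rho>s)}"

definition pmeet :: "'a set set \<Rightarrow> 'a set set \<Rightarrow> 'a set set" where
  "pmeet \<xi> \<xi>' = {X \<inter> X' | X X'. X \<in> \<xi> \<and> X' \<in> \<xi>' \<and> X \<inter> X' \<noteq> {}}"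

end

theory Submission
  imports Defs
begin

text \<open>A product state over a partition is the tensor product of its own marginals on the
  blocks, and its marginal on any set Y of sites is the product of its marginals on the
  nonempty traces Z \<inter> Y of the blocks. If \<rho> is a product over both \<xi> and \<xi>', the
  marginal of \<rho> on a block X of \<xi> therefore factorizes over the pieces X \<inter> X' of \<xi>',
  and regrouping the factors shows that \<rho> is the product of its marginals over the meet.
  Conversely, a product over a refinement is a product over the coarser partition, by the
  same regrouping read backwards.\<close>

lemma configs_empty: "configs d {} = {(\<lambda>_. 0)}"
  by (auto simp: configs_def)

lemma finite_configs:
  assumes "finite X"
  shows "finite (configs d X)"
proof -
  have "configs d X \<subseteq> (\<lambda>f i. if i \<in> X then f i else 0) ` (\<Pi>\<^sub>E i\<in>X. {..<d i})"
  proof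
    fix a assume a: "a \<in> configs d X"
    then have "restrict a X \<in> (\<Pi>\<^sub>E i\<in>X. {..<d i})" "a = (\<lambda>i. if i \<in> X then restrict a X i else 0)"
      by (auto simp: configs_def fun_eq_iff)
    then show "a \<in> (\<lambda>f i. if i \<in> X then f i else 0) ` (\<Pi>\<^sub>E i\<in>X. {..<d i})" by blast
  qed
  then show ?thesis
    using assms by (rule finite_subset[OF _ finite_imageI[OF finite_PiE]]) simp
qed

lemma restr_configs: "a \<in> configs d L \<Longrightarrow> X \<subseteq> L \<Longrightarrow> restr X a \<in> configs d X"
  by (auto simp: configs_def restr_def)

lemma restr_id: "a \<in> configs d X \<Longrightarrow> restr X a = a"
  by (auto simp: configs_def restr_def)

lemma restr_restr: "restr Z (restr X a) = restr (Z \<inter> X) a"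
  by (auto simp: restr_def)

lemma restr_Int_support: "a \<in> configs d Y \<Longrightarrow> restr Z a = restr (Z \<inter> Y) a"
  by (auto simp: configs_def restr_def)

lemma restr_disjoint_support: "a \<in> configs d Y \<Longrightarrow> Z \<inter> Y = {} \<Longrightarrow> restr Z a = (\<lambda>_. 0)"
  by (auto simp: configs_def restr_def fun_eq_iff)

text \<open>Configurations with disjoint supports are glued by adding them, which realizes
  the isomorphism H_A \<otimes> H_B \<cong> H_{A \<union> B} on basis vectors.\<close>

definition glue :: "config \<Rightarrow> config \<Rightarrow> config" where
  "glue a c = (\<lambda>i. a i + c i)"

lemma glue_configs:
  "a \<in> configs d A \<Longrightarrow> c \<in> configs d B \<Longrightarrow> A \<inter> B = {} \<Longrightarrow> glue a c \<in> configs d (A \<union> B)"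
  by (auto simp: configs_def glue_def)

lemma restr_glue_left:
  "a \<in> configs d A \<Longrightarrow> c \<in> configs d B \<Longrightarrow> A \<inter> B = {} \<Longrightarrow> restr A (glue a c) = a"
  by (auto simp: configs_def restr_def glue_def fun_eq_iff)

lemma restr_glue_right:
  "a \<in> configs d A \<Longrightarrow> c \<in> configs d B \<Longrightarrow> A \<inter> B = {} \<Longrightarrow> restr B (glue a c) = c"
  by (auto simp: configs_def restr_def glue_def fun_eq_iff)

lemma bij_betw_glue:
  assumes "A \<inter> B = {}"
  shows "bij_betw (\<lambda>(a, c). glue a c) (configs d A \<times> configs d B) (configs d (A \<union> B))"
proof (rule bij_betw_byWitness[where f' = "\<lambda>x. (restr A x, restr B x)"])
  show "\<forall>p\<in>configs d A \<times> configs d B. (restr A (case p of (a, c) \<Rightarrow> glue a c),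
      restr B (case p of (a, c) \<Rightarrow> glue a c)) = p"
    using assms by (auto simp: restr_glue_left restr_glue_right)
  show "\<forall>x\<in>configs d (A \<union> B). (case (restr A x, restr B x) of (a, c) \<Rightarrow> glue a c) = x"
    using assms by (auto simp: configs_def restr_def glue_def fun_eq_iff)
  show "(\<lambda>(a, c). glue a c) ` (configs d A \<times> configs d B) \<subseteq> configs d (A \<union> B)"
    using assms glue_configs by auto
  show "(\<lambda>x. (restr A x, restr B x)) ` configs d (A \<union> B) \<subseteq> configs d A \<times> configs d B"
    by (auto intro: restr_configs)
qed

lemma sum_configs_Un:
  assumes "A \<inter> B = {}"
  shows "sum g (configs d (A \<union> B)) = (\<Sum>a\<in>configs d A. \<Sum>c\<in>configs d B. g (glue a c))"
  using sum.reindex_bij_betw[OF bij_betw_glue[OF assms], of g]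
  by (simp add: sum.cartesian_product split_def)

lemma sum_configs_UN_prod:
  assumes "finite I" "\<And>i j. i \<in> I \<Longrightarrow> j \<in> I \<Longrightarrow> i \<noteq> j \<Longrightarrow> B i \<inter> B j = {}"
  shows "(\<Sum>c\<in>configs d (\<Union>i\<in>I. B i). \<Prod>i\<in>I. f i (restr (B i) c))
       = (\<Prod>i\<in>I. \<Sum>c\<in>configs d (B i). (f i c :: complex))"
  using assms
proof (induction I rule: finite_induct)
  case empty
  then show ?case by (simp add: configs_empty)
next
  case (insert k I)
  have disj: "B k \<inter> (\<Union>i\<in>I. B i) = {}" using insert by blast
  have IH: "(\<Sum>c\<in>configs d (\<Union>i\<in>I. B i). \<Prod>i\<in>I. f i (restr (B i) c))
       = (\<Prod>i\<in>I. \<Sum>c\<in>configs d (B i). f i c)"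
    using insert by (intro insert.IH) auto
  have restr_other: "restr (B i) (glue a c) = restr (B i) c" if "a \<in> configs d (B k)" "i \<in> I" for a c i
  proof -
    have "B i \<inter> B k = {}" using insert that by auto
    then show ?thesis using that by (auto simp: restr_def glue_def configs_def fun_eq_iff)
  qed
  have "(\<Sum>c\<in>configs d (\<Union>i\<in>insert k I. B i). \<Prod>i\<in>insert k I. f i (restr (B i) c))
     = (\<Sum>a\<in>configs d (B k). \<Sum>c\<in>configs d (\<Union>i\<in>I. B i).
          f k (restr (B k) (glue a c)) * (\<Prod>i\<in>I. f i (restr (B i) (glue a c))))"
    using sum_configs_Un[OF disj] insert by simp
  also have "\<dots> = (\<Sum>a\<in>configs d (B k). \<Sum>c\<in>configs d (\<Union>i\<in>I. B i).
          f k a * (\<Prod>i\<in>I. f i (restr (B i) c)))"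
    by (intro sum.cong refl) (simp add: restr_glue_left[OF _ _ disj] restr_other)
  also have "\<dots> = (\<Prod>i\<in>insert k I. \<Sum>c\<in>configs d (B i). f i c)"
    using insert by (simp add: sum_distrib_left[symmetric] IH sum_distrib_right)
  finally show ?case .
qed

subsection \<open>Marginals\<close>

text \<open>The marginal of \<rho> on Y \<subseteq> L is the partial trace over the sites L - Y.\<close>

definition marginal :: "(nat \<Rightarrow> nat) \<Rightarrow> nat set \<Rightarrow> nat set \<Rightarrow> operator \<Rightarrow> operator" where
  "marginal d L Y \<rho> = (\<lambda>a b. if a \<in> configs d Y \<and> b \<in> configs d Y
     then (\<Sum>c\<in>configs d (L - Y). \<rho> (glue a c) (glue b c)) else 0)"

lemma marginal_self:
  assumes "density d X \<sigma>"
  shows "marginal d X X \<sigma> = \<sigma>"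
  using assms by (auto simp: marginal_def configs_empty glue_def density_def fun_eq_iff)

lemma marginal_empty:
  assumes "density d Z \<sigma>"
  shows "marginal d Z {} \<sigma> (\<lambda>_. 0) (\<lambda>_. 0) = 1"
  using assms by (simp add: marginal_def configs_empty glue_def density_def)

lemma marginal_tensor:
  assumes P: "partition_on L \<eta>" and fL: "finite L" and Y: "Y \<subseteq> L"
    and a: "a \<in> configs d Y" and b: "b \<in> configs d Y"
  shows "marginal d L Y (tensor d L \<eta> \<sigma>s) a b
       = (\<Prod>Z\<in>\<eta>. marginal d Z (Z \<inter> Y) (\<sigma>s Z) (restr Z a) (restr Z b))"
proof -
  have disj: "Y \<inter> (L - Y) = {}" by auto
  have blocks_disj: "(Z - Y) \<inter> (Z' - Y) = {}" if "Z \<in> \<eta>" "Z' \<in> \<eta>" "Z \<noteq> Z'" for Z Z'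
    using disjointD[OF partition_onD2[OF P] that] by blast
  have restr_glue: "restr Z (glue a c) = glue (restr Z a) (restr (Z - Y) c)"
    if "c \<in> configs d (L - Y)" for a c Z
    using that by (auto simp: restr_def glue_def configs_def fun_eq_iff)
  have "marginal d L Y (tensor d L \<eta> \<sigma>s) a b
      = (\<Sum>c\<in>configs d (L - Y). \<Prod>Z\<in>\<eta>. \<sigma>s Z (restr Z (glue a c)) (restr Z (glue b c)))"
  proof -
    have "glue a c \<in> configs d L" "glue b c \<in> configs d L" if "c \<in> configs d (L - Y)" for c
      using glue_configs[OF a that disj] glue_configs[OF b that disj] Y
      by (simp_all add: Un_absorb1)
    then show ?thesis using a b unfolding marginal_def tensor_def by (simp cong: sum.cong)
  qed
  also have "\<dots> = (\<Sum>c\<in>configs d (\<Union>Z\<in>\<eta>. Z - Y). \<Prod>Z\<in>\<eta>.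
        \<sigma>s Z (glue (restr Z a) (restr (Z - Y) c)) (glue (restr Z b) (restr (Z - Y) c)))"
    using partition_onD1[OF P] by (intro sum.cong prod.cong) (auto simp: restr_glue)
  also have "\<dots> = (\<Prod>Z\<in>\<eta>. \<Sum>c\<in>configs d (Z - Y). \<sigma>s Z (glue (restr Z a) c) (glue (restr Z b) c))"
    using finite_elements[OF fL P] blocks_disj by (rule sum_configs_UN_prod)
  also have "\<dots> = (\<Prod>Z\<in>\<eta>. marginal d Z (Z \<inter> Y) (\<sigma>s Z) (restr Z a) (restr Z b))"
  proof (intro prod.cong refl)
    fix Z
    have "restr Z a \<in> configs d (Z \<inter> Y)" "restr Z b \<in> configs d (Z \<inter> Y)" "Z - Z \<inter> Y = Z - Y"
      using a b by (auto simp: restr_def configs_def)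
    then show "(\<Sum>c\<in>configs d (Z - Y). \<sigma>s Z (glue (restr Z a) c) (glue (restr Z b) c))
        = marginal d Z (Z \<inter> Y) (\<sigma>s Z) (restr Z a) (restr Z b)"
      unfolding marginal_def by simp
  qed
  finally show ?thesis .
qed

definition quad_form :: "(nat \<Rightarrow> nat) \<Rightarrow> nat set \<Rightarrow> operator \<Rightarrow> (config \<Rightarrow> complex) \<Rightarrow> complex" where
  "quad_form d X \<rho> v = (\<Sum>a\<in>configs d X. \<Sum>b\<in>configs d X. cnj (v a) * \<rho> a b * v b)"

lemma density_iff:
  "density d X \<rho> \<longleftrightarrow>
     (\<forall>a b. (a \<notin> configs d X \<or> b \<notin> configs d X) \<longrightarrow> \<rho> a b = 0) \<and>
     (\<forall>v. Im (quad_form d X \<rho> v) = 0 \<and> Re (quad_form d X \<rho> v) \<ge> 0) \<and>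
     (\<Sum>a\<in>configs d X. \<rho> a a) = 1"
  unfolding density_def quad_form_def Let_def by simp

text \<open>The quadratic form of a marginal is a sum of quadratic forms of \<rho>, one for each
  basis vector c of the traced-out sites, evaluated at v \<otimes> e_c.\<close>

lemma quad_form_marginal:
  assumes "Y \<subseteq> L" "finite L"
  shows "quad_form d Y (marginal d L Y \<rho>) v
       = (\<Sum>c\<in>configs d (L - Y). quad_form d L \<rho> (\<lambda>x. if restr (L - Y) x = c then v (restr Y x) else 0))"
proof -
  define M where "M = L - Y"
  have disj: "Y \<inter> M = {}" and L: "L = Y \<union> M" using assms by (auto simp: M_def)
  have fin: "finite (configs d M)" using assms by (simp add: M_def finite_configs)
  have lift: "(\<Sum>x\<in>configs d L. if restr M x = c then h x else 0) = (\<Sum>a\<in>configs d Y. h (glue a c))"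
    if c: "c \<in> configs d M" for c and h :: "config \<Rightarrow> complex"
  proof -
    have "(\<Sum>x\<in>configs d L. if restr M x = c then h x else 0)
        = (\<Sum>a\<in>configs d Y. \<Sum>c'\<in>configs d M. if c' = c then h (glue a c') else 0)"
      unfolding L sum_configs_Un[OF disj] by (intro sum.cong refl) (simp add: restr_glue_right[OF _ _ disj])
    then show ?thesis using fin c by (simp add: sum.delta)
  qed
  have "quad_form d Y (marginal d L Y \<rho>) v
      = (\<Sum>c\<in>configs d M. \<Sum>a\<in>configs d Y. \<Sum>b\<in>configs d Y. cnj (v a) * \<rho> (glue a c) (glue b c) * v b)"
    unfolding quad_form_def marginal_def M_def[symmetric]
    by (simp add: sum_distrib_left sum_distrib_right sum.swap[where B = "configs d M"])
  also have "\<dots> = (\<Sum>c\<in>configs d M. quad_form d L \<rho> (\<lambda>x. if restr M x = c then v (restr Y x) else 0))"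
  proof (intro sum.cong refl)
    fix c assume c: "c \<in> configs d M"
    have "quad_form d L \<rho> (\<lambda>x. if restr M x = c then v (restr Y x) else 0)
        = (\<Sum>x\<in>configs d L. if restr M x = c then
             (\<Sum>y\<in>configs d L. if restr M y = c then
                 cnj (v (restr Y x)) * \<rho> x y * v (restr Y y) else 0) else 0)"
      unfolding quad_form_def by (auto intro!: sum.cong)
    then show "(\<Sum>a\<in>configs d Y. \<Sum>b\<in>configs d Y. cnj (v a) * \<rho> (glue a c) (glue b c) * v b)
        = quad_form d L \<rho> (\<lambda>x. if restr M x = c then v (restr Y x) else 0)"
      by (simp add: lift[OF c] restr_glue_left[OF _ c disj])
  qed
  finally show ?thesis by (simp add: M_def)
qed

lemma marginal_density:
  assumes "density d L \<rho>" "Y \<subseteq> L" "finite L"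
  shows "density d Y (marginal d L Y \<rho>)"
  unfolding density_iff
proof (intro conjI allI impI)
  fix a b assume "a \<notin> configs d Y \<or> b \<notin> configs d Y"
  then show "marginal d L Y \<rho> a b = 0" by (auto simp: marginal_def)
next
  fix v
  have psd: "Im (quad_form d L \<rho> w) = 0" "Re (quad_form d L \<rho> w) \<ge> 0" for w
    using assms(1) unfolding density_iff by auto
  show "Im (quad_form d Y (marginal d L Y \<rho>) v) = 0"
    unfolding quad_form_marginal[OF assms(2,3)] Im_sum using psd by simp
  show "0 \<le> Re (quad_form d Y (marginal d L Y \<rho>) v)"
    unfolding quad_form_marginal[OF assms(2,3)] Re_sum using psd by (simp add: sum_nonneg)
next
  have L: "L = Y \<union> (L - Y)" and disj: "Y \<inter> (L - Y) = {}" using assms(2) by auto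
  have "(\<Sum>a\<in>configs d Y. marginal d L Y \<rho> a a)
      = (\<Sum>a\<in>configs d Y. \<Sum>c\<in>configs d (L - Y). \<rho> (glue a c) (glue a c))"
    by (simp add: marginal_def)
  also have "\<dots> = (\<Sum>x\<in>configs d L. \<rho> x x)"
    by (subst L) (rule sum_configs_Un[OF disj, symmetric])
  finally show "(\<Sum>a\<in>configs d Y. marginal d L Y \<rho> a a) = 1"
    using assms(1) unfolding density_iff by simp
qed

subsection \<open>Product states\<close>

lemma tensor_cong: "(\<And>X. X \<in> \<xi> \<Longrightarrow> f X = g X) \<Longrightarrow> tensor d L \<xi> f = tensor d L \<xi> g"
  unfolding tensor_def by (intro ext) (simp cong: prod.cong)

lemma marginal_product_state:
  assumes P: "partition_on L \<eta>" and fL: "finite L" and \<sigma>s: "\<forall>Z\<in>\<eta>. \<sigma>s Z \<in> D d Z"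
    and Y: "Y \<subseteq> L" and a: "a \<in> configs d Y" and b: "b \<in> configs d Y"
  shows "marginal d L Y (tensor d L \<eta> \<sigma>s) a b
       = (\<Prod>Z\<in>{Z\<in>\<eta>. Z \<inter> Y \<noteq> {}}. marginal d Z (Z \<inter> Y) (\<sigma>s Z) (restr Z a) (restr Z b))"
  unfolding marginal_tensor[OF P fL Y a b]
proof (rule prod.mono_neutral_cong_right[OF finite_elements[OF fL P]])
  show "\<forall>Z\<in>\<eta> - {Z\<in>\<eta>. Z \<inter> Y \<noteq> {}}. marginal d Z (Z \<inter> Y) (\<sigma>s Z) (restr Z a) (restr Z b) = 1"
    using \<sigma>s restr_disjoint_support[OF a] restr_disjoint_support[OF b] marginal_empty
    by (auto simp: D_def)
qed auto

lemma marginal_product_state_within_block: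
  assumes P: "partition_on L \<eta>" and fL: "finite L" and \<sigma>s: "\<forall>Z\<in>\<eta>. \<sigma>s Z \<in> D d Z"
    and W: "W \<in> \<eta>" and Y: "Y \<subseteq> W" "Y \<noteq> {}"
  shows "marginal d L Y (tensor d L \<eta> \<sigma>s) = marginal d W Y (\<sigma>s W)"
proof (intro ext)
  fix a b
  show "marginal d L Y (tensor d L \<eta> \<sigma>s) a b = marginal d W Y (\<sigma>s W) a b"
  proof (cases "a \<in> configs d Y \<and> b \<in> configs d Y")
    case True
    then have a: "a \<in> configs d Y" and b: "b \<in> configs d Y" by auto
    have "{Z\<in>\<eta>. Z \<inter> Y \<noteq> {}} = {W}"
      using disjointD[OF partition_onD2[OF P]] W Y by blast
    moreover have "restr W a = a" "restr W b = b" "W \<inter> Y = Y"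
      using restr_Int_support[OF a, of W] restr_Int_support[OF b, of W] restr_id[OF a] restr_id[OF b] Y
      by (auto simp: Int_absorb1)
    moreover have "Y \<subseteq> L" using W Y partition_onD1[OF P] by blast
    ultimately show ?thesis using marginal_product_state[OF P fL \<sigma>s _ a b] by simp
  qed (auto simp: marginal_def)
qed

lemma D_unc_D: "\<rho> \<in> D_unc d L \<eta> \<Longrightarrow> \<rho> \<in> D d L"
  by (simp add: D_unc_def)

lemma D_unc_eq_tensor_marginals:
  assumes P: "partition_on L \<eta>" and fL: "finite L" and \<rho>: "\<rho> \<in> D_unc d L \<eta>"
  shows "\<rho> = tensor d L \<eta> (\<lambda>Z. marginal d L Z \<rho>)"
proof -
  obtain \<sigma>s where \<sigma>s: "\<forall>Z\<in>\<eta>. \<sigma>s Z \<in> D d Z" and \<rho>_eq: "\<rho> = tensor d L \<eta> \<sigma>s"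
    using \<rho> unfolding D_unc_def by blast
  have "marginal d L Z \<rho> = \<sigma>s Z" if Z: "Z \<in> \<eta>" for Z
  proof -
    have "Z \<noteq> {}" using partition_onD3[OF P] Z by blast
    then have "marginal d L Z \<rho> = marginal d Z Z (\<sigma>s Z)"
      unfolding \<rho>_eq by (rule marginal_product_state_within_block[OF P fL \<sigma>s Z order_refl])
    also have "\<dots> = \<sigma>s Z" using \<sigma>s Z by (simp add: D_def marginal_self)
    finally show ?thesis .
  qed
  then have "tensor d L \<eta> (\<lambda>Z. marginal d L Z \<rho>) = tensor d L \<eta> \<sigma>s"
    by (rule tensor_cong)
  then show ?thesis using \<rho>_eq by simp
qed

lemma D_unc_tensor_marginalsI:
  assumes P: "partition_on L \<eta>" and fL: "finite L" and \<rho>: "\<rho> \<in> D d L"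
    and \<rho>_eq: "\<rho> = tensor d L \<eta> (\<lambda>Z. marginal d L Z \<rho>)"
  shows "\<rho> \<in> D_unc d L \<eta>"
  unfolding D_unc_def
proof (intro CollectI conjI exI[where x = "\<lambda>Z. marginal d L Z \<rho>"] ballI)
  show "marginal d L Z \<rho> \<in> D d Z" if "Z \<in> \<eta>" for Z
    using marginal_density[of d L \<rho> Z] \<rho> that partition_onD1[OF P] fL by (auto simp: D_def)
qed (fact \<rho> \<rho>_eq)+

lemma marginal_product_state_factorizes:
  assumes P: "partition_on L \<eta>" and fL: "finite L" and \<rho>: "\<rho> \<in> D_unc d L \<eta>" and Y: "Y \<subseteq> L"
  shows "marginal d L Y \<rho> = tensor d Y ((\<inter>) Y ` \<eta> - {{}}) (\<lambda>W. marginal d L W \<rho>)"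
proof (intro ext)
  fix a b
  obtain \<sigma>s where \<sigma>s: "\<forall>Z\<in>\<eta>. \<sigma>s Z \<in> D d Z" and \<rho>_eq: "\<rho> = tensor d L \<eta> \<sigma>s"
    using \<rho> unfolding D_unc_def by blast
  show "marginal d L Y \<rho> a b = tensor d Y ((\<inter>) Y ` \<eta> - {{}}) (\<lambda>W. marginal d L W \<rho>) a b"
  proof (cases "a \<in> configs d Y \<and> b \<in> configs d Y")
    case True
    then have a: "a \<in> configs d Y" and b: "b \<in> configs d Y" by auto
    have pieces: "(\<inter>) Y ` \<eta> - {{}} = (\<inter>) Y ` {Z\<in>\<eta>. Z \<inter> Y \<noteq> {}}" by blast
    have inj: "inj_on ((\<inter>) Y) {Z\<in>\<eta>. Z \<inter> Y \<noteq> {}}"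
      using disjointD[OF partition_onD2[OF P]] by (intro inj_onI) blast
    have piece: "marginal d Z (Z \<inter> Y) (\<sigma>s Z) (restr Z a) (restr Z b)
        = marginal d L (Y \<inter> Z) \<rho> (restr (Y \<inter> Z) a) (restr (Y \<inter> Z) b)"
      if "Z \<in> \<eta>" "Z \<inter> Y \<noteq> {}" for Z
      using marginal_product_state_within_block[OF P fL \<sigma>s that(1), of "Y \<inter> Z"] that
        restr_Int_support[OF a, of Z] restr_Int_support[OF b, of Z]
      unfolding \<rho>_eq by (simp add: Int_commute)
    have "marginal d L Y \<rho> a b
        = (\<Prod>Z\<in>{Z\<in>\<eta>. Z \<inter> Y \<noteq> {}}. marginal d Z (Z \<inter> Y) (\<sigma>s Z) (restr Z a) (restr Z b))"
      unfolding \<rho>_eq by (rule marginal_product_state[OF P fL \<sigma>s Y a b])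
    also have "\<dots> = (\<Prod>W\<in>(\<inter>) Y ` \<eta> - {{}}. marginal d L W \<rho> (restr W a) (restr W b))"
      unfolding pieces prod.reindex[OF inj] by (intro prod.cong) (auto simp: piece)
    finally show ?thesis using True by (simp add: tensor_def)
  qed (auto simp: marginal_def tensor_def)
qed

subsection \<open>Refinement\<close>

lemma tensor_regroup:
  assumes R: "refines L \<eta> \<xi>" and fL: "finite L"
  shows "tensor d L \<eta> \<sigma>s = tensor d L \<xi> (\<lambda>X. tensor d X {Z\<in>\<eta>. Z \<subseteq> X} \<sigma>s)"
proof (intro ext)
  fix a b
  have P: "partition_on L \<eta>" and Q: "partition_on L \<xi>" and sub: "\<forall>Z\<in>\<eta>. \<exists>X\<in>\<xi>. Z \<subseteq> X"
    using R by (auto simp: refines_def)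
  show "tensor d L \<eta> \<sigma>s a b = tensor d L \<xi> (\<lambda>X. tensor d X {Z\<in>\<eta>. Z \<subseteq> X} \<sigma>s) a b"
  proof (cases "a \<in> configs d L \<and> b \<in> configs d L")
    case True
    have groups: "(\<Union>X\<in>\<xi>. {Z\<in>\<eta>. Z \<subseteq> X}) = \<eta>" using sub by auto
    have groups_disj: "{Z\<in>\<eta>. Z \<subseteq> X} \<inter> {Z\<in>\<eta>. Z \<subseteq> X'} = {}"
      if "X \<in> \<xi>" "X' \<in> \<xi>" "X \<noteq> X'" for X X'
    proof (rule equals0I)
      fix Z assume "Z \<in> {Z\<in>\<eta>. Z \<subseteq> X} \<inter> {Z\<in>\<eta>. Z \<subseteq> X'}"
      then have "Z \<in> \<eta>" "Z \<subseteq> X \<inter> X'" by auto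
      then show False using disjointD[OF partition_onD2[OF Q] that] partition_onD3[OF P] by auto
    qed
    have "tensor d L \<eta> \<sigma>s a b = (\<Prod>X\<in>\<xi>. \<Prod>Z\<in>{Z\<in>\<eta>. Z \<subseteq> X}. \<sigma>s Z (restr Z a) (restr Z b))"
      unfolding tensor_def using True finite_elements[OF fL P] finite_elements[OF fL Q] groups_disj
      by (simp add: prod.UNION_disjoint[symmetric] groups)
    also have "\<dots> = tensor d L \<xi> (\<lambda>X. tensor d X {Z\<in>\<eta>. Z \<subseteq> X} \<sigma>s) a b"
    proof -
      have "restr X a \<in> configs d X" "restr X b \<in> configs d X" if "X \<in> \<xi>" for X
        using True that partition_onD1[OF Q] by (auto intro: restr_configs)
      then show ?thesis
        using True by (auto simp: tensor_def restr_restr Int_absorb2 intro!: prod.cong)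
    qed
    finally show ?thesis .
  qed (auto simp: tensor_def)
qed

lemma tensor_marginals_coarsen:
  assumes R: "refines L M \<xi>" and fL: "finite L" and P: "partition_on L \<eta>" and \<rho>: "\<rho> \<in> D_unc d L \<eta>"
    and pieces: "\<And>X. X \<in> \<xi> \<Longrightarrow> (\<inter>) X ` \<eta> - {{}} = {Z\<in>M. Z \<subseteq> X}"
  shows "tensor d L M (\<lambda>Z. marginal d L Z \<rho>) = tensor d L \<xi> (\<lambda>X. marginal d L X \<rho>)"
proof -
  have "tensor d L M (\<lambda>Z. marginal d L Z \<rho>)
      = tensor d L \<xi> (\<lambda>X. tensor d X {Z\<in>M. Z \<subseteq> X} (\<lambda>Z. marginal d L Z \<rho>))"
    by (rule tensor_regroup[OF R fL])
  also have "\<dots> = tensor d L \<xi> (\<lambda>X. marginal d L X \<rho>)"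
  proof (rule tensor_cong)
    fix X assume X: "X \<in> \<xi>"
    have "X \<subseteq> L" using R X by (auto simp: refines_def dest: partition_onD1)
    then show "tensor d X {Z\<in>M. Z \<subseteq> X} (\<lambda>Z. marginal d L Z \<rho>) = marginal d L X \<rho>"
      using marginal_product_state_factorizes[OF P fL \<rho>] pieces[OF X] by simp
  qed
  finally show ?thesis .
qed

lemma pieces_of_refinement:
  assumes R: "refines L \<eta> \<xi>" and X: "X \<in> \<xi>"
  shows "(\<inter>) X ` \<eta> - {{}} = {Z\<in>\<eta>. Z \<subseteq> X}"
proof -
  have P: "partition_on L \<eta>" and Q: "partition_on L \<xi>" and sub: "\<forall>Z\<in>\<eta>. \<exists>X'\<in>\<xi>. Z \<subseteq> X'"
    using R by (auto simp: refines_def)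
  have inside: "Z \<subseteq> X" if Z: "Z \<in> \<eta>" "X \<inter> Z \<noteq> {}" for Z
  proof -
    obtain X' where X': "X' \<in> \<xi>" "Z \<subseteq> X'" using sub Z(1) by blast
    have "X' = X"
    proof (rule ccontr)
      assume "X' \<noteq> X"
      then have "X' \<inter> X = {}" by (rule disjointD[OF partition_onD2[OF Q] X'(1) X])
      then show False using X'(2) Z(2) by blast
    qed
    then show ?thesis using X'(2) by simp
  qed
  show ?thesis
  proof
    show "(\<inter>) X ` \<eta> - {{}} \<subseteq> {Z\<in>\<eta>. Z \<subseteq> X}"
    proof
      fix W assume "W \<in> (\<inter>) X ` \<eta> - {{}}"
      then obtain Z where Z: "Z \<in> \<eta>" "W = X \<inter> Z" "X \<inter> Z \<noteq> {}" by blast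
      moreover have "Z \<subseteq> X" using inside Z(1,3) .
      ultimately show "W \<in> {Z\<in>\<eta>. Z \<subseteq> X}" by (simp add: Int_absorb1)
    qed
    show "{Z\<in>\<eta>. Z \<subseteq> X} \<subseteq> (\<inter>) X ` \<eta> - {{}}"
    proof
      fix Z assume "Z \<in> {Z\<in>\<eta>. Z \<subseteq> X}"
      then show "Z \<in> (\<inter>) X ` \<eta> - {{}}"
        using partition_onD3[OF P] by (intro DiffI image_eqI[where x = Z]) auto
    qed
  qed
qed

lemma D_unc_antimono:
  assumes R: "refines L \<eta> \<xi>" and fL: "finite L"
  shows "D_unc d L \<eta> \<subseteq> D_unc d L \<xi>"
proof
  fix \<rho> assume \<rho>: "\<rho> \<in> D_unc d L \<eta>"
  have P: "partition_on L \<eta>" and Q: "partition_on L \<xi>" using R by (auto simp: refines_def)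
  have "\<rho> = tensor d L \<eta> (\<lambda>Z. marginal d L Z \<rho>)"
    by (rule D_unc_eq_tensor_marginals[OF P fL \<rho>])
  also have "\<dots> = tensor d L \<xi> (\<lambda>X. marginal d L X \<rho>)"
    by (rule tensor_marginals_coarsen[OF R fL P \<rho> pieces_of_refinement[OF R]])
  finally show "\<rho> \<in> D_unc d L \<xi>"
    by (rule D_unc_tensor_marginalsI[OF Q fL D_unc_D[OF \<rho>]])
qed

subsection \<open>The meet of two partitions\<close>

lemma pmeet_commute: "pmeet \<xi> \<xi>' = pmeet \<xi>' \<xi>"
  unfolding pmeet_def by blast

lemma refines_pmeet:
  assumes Q: "partition_on L \<xi>" and Q': "partition_on L \<xi>'"
  shows "refines L (pmeet \<xi> \<xi>') \<xi>"
  unfolding refines_def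
proof (intro conjI)
  show "partition_on L (pmeet \<xi> \<xi>')"
  proof (rule partition_onI)
    show "\<Union> (pmeet \<xi> \<xi>') = L"
      using partition_onD1[OF Q] partition_onD1[OF Q'] unfolding pmeet_def by blast
    show "disjnt Z W" if "Z \<in> pmeet \<xi> \<xi>'" "W \<in> pmeet \<xi> \<xi>'" "Z \<noteq> W" for Z W
      using that disjointD[OF partition_onD2[OF Q]] disjointD[OF partition_onD2[OF Q']]
      unfolding pmeet_def disjnt_def by blast
    show "{} \<notin> pmeet \<xi> \<xi>'" unfolding pmeet_def by blast
  qed
  show "\<forall>Z\<in>pmeet \<xi> \<xi>'. \<exists>X\<in>\<xi>. Z \<subseteq> X" unfolding pmeet_def by blast
qed (fact Q)

lemma pieces_of_pmeet:
  assumes Q: "partition_on L \<xi>" and X: "X \<in> \<xi>"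
  shows "(\<inter>) X ` \<xi>' - {{}} = {Z\<in>pmeet \<xi> \<xi>'. Z \<subseteq> X}"
  using X disjointD[OF partition_onD2[OF Q], of X] unfolding pmeet_def by blast

lemma D_unc_inter_subset_pmeet:
  assumes Q: "partition_on L \<xi>" and Q': "partition_on L \<xi>'" and fL: "finite L"
  shows "D_unc d L \<xi> \<inter> D_unc d L \<xi>' \<subseteq> D_unc d L (pmeet \<xi> \<xi>')"
proof
  fix \<rho> assume "\<rho> \<in> D_unc d L \<xi> \<inter> D_unc d L \<xi>'"
  then have \<rho>: "\<rho> \<in> D_unc d L \<xi>" and \<rho>': "\<rho> \<in> D_unc d L \<xi>'" by auto
  have R: "refines L (pmeet \<xi> \<xi>') \<xi>" by (rule refines_pmeet[OF Q Q'])
  then have M: "partition_on L (pmeet \<xi> \<xi>')" by (simp add: refines_def)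
  have "\<rho> = tensor d L \<xi> (\<lambda>X. marginal d L X \<rho>)"
    by (rule D_unc_eq_tensor_marginals[OF Q fL \<rho>])
  also have "\<dots> = tensor d L (pmeet \<xi> \<xi>') (\<lambda>Z. marginal d L Z \<rho>)"
    by (rule tensor_marginals_coarsen[OF R fL Q' \<rho>' pieces_of_pmeet[OF Q], symmetric])
  finally show "\<rho> \<in> D_unc d L (pmeet \<xi> \<xi>')"
    by (rule D_unc_tensor_marginalsI[OF M fL D_unc_D[OF \<rho>]])
qed

theorem mainTheorem18:
  fixes n :: nat and d :: "nat \<Rightarrow> nat" and \<xi> \<xi>' :: "nat set set"
  assumes "n \<ge> 1"
    and "\<And>i. i \<in> {1..n} \<Longrightarrow> 1 < d i"
    and "partition_on {1..n} \<xi>"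
    and "partition_on {1..n} \<xi>'"
  shows "D_unc d {1..n} \<xi> \<inter> D_unc d {1..n} \<xi>' = D_unc d {1..n} (pmeet \<xi> \<xi>')"
proof
  have fin: "finite {1..n}" by simp
  show "D_unc d {1..n} \<xi> \<inter> D_unc d {1..n} \<xi>' \<subseteq> D_unc d {1..n} (pmeet \<xi> \<xi>')"
    by (rule D_unc_inter_subset_pmeet[OF assms(3,4) fin])
  have "D_unc d {1..n} (pmeet \<xi> \<xi>') \<subseteq> D_unc d {1..n} \<xi>"
    by (rule D_unc_antimono[OF refines_pmeet[OF assms(3,4)] fin])
  moreover have "D_unc d {1..n} (pmeet \<xi> \<xi>') \<subseteq> D_unc d {1..n} \<xi>'"
    unfolding pmeet_commute[of \<xi>] by (rule D_unc_antimono[OF refines_pmeet[OF assms(4,3)] fin])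
  ultimately show "D_unc d {1..n} (pmeet \<xi> \<xi>') \<subseteq> D_unc d {1..n} \<xi> \<inter> D_unc d {1..n} \<xi>'"
    by blast
qed

end
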